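(* Let $G$ be a connected nonbipartite graph with vertex set $\{u_1,\dots,u_m\}$ and $\kappa(G)=\delta(G)>0$, and let $n\ge 3$. Let $S\subseteq V(G\times K_n)$ satisfy: (1) $|S|=(n-1)\delta(G)$; (2) $S_i':=S_i\setminus S\neq\varnothing$ for every $i=1,\dots,m$; (3) $G\times K_n-S$ has no isolated vertex. Then for every $i\in\{1,\dots,m\}$, the set $S_i'$ is contained in the vertex set of a single connected component of $G\times K_n-S$.
   Context: The Kronecker product $G_1\times G_2$ has vertex set $V(G_1)\times V(G_2)$, with $(u_1,v_1)(u_2,v_2)$ an edge iff $u_1u_2\in E(G_1)$ and $v_1v_2\in E(G_2)$. Write $V(K_n)=\{v_1,\dots,v_n\}$ and $S_i=\{u_i\}\times V(K_n)$ for $i=1,\dots,m$. *)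

theory Defs
  imports Main
begin

definition simple_graph :: "'a set \<Rightarrow> ('a \<Rightarrow> 'a \<Rightarrow> bool) \<Rightarrow> bool" where
  "simple_graph V E \<longleftrightarrow> finite V \<and> (\<forall>x y. E x y \<longrightarrow> x \<in> V \<and> y \<in> V)
     \<and> (\<forall>x y. E x y \<longrightarrow> E y x) \<and> (\<forall>x. \<not> E x x)"

definition induced :: "'a set \<Rightarrow> ('a \<Rightarrow> 'a \<Rightarrow> bool) \<Rightarrow> 'a \<Rightarrow> 'a \<Rightarrow> bool" where
  "induced W E x y \<longleftrightarrow> x \<in> W \<and> y \<in> W \<and> E x y"

definition component :: "'a set \<Rightarrow> ('a \<Rightarrow> 'a \<Rightarrow> bool) \<Rightarrow> 'a \<Rightarrow> 'a set" where
  "component W E x = {y. (induced W E)\<^sup>*\<^sup>* x y \<and> y \<in> W}"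

definition connected_graph :: "'a set \<Rightarrow> ('a \<Rightarrow> 'a \<Rightarrow> bool) \<Rightarrow> bool" where
  "connected_graph W E \<longleftrightarrow> W \<noteq> {} \<and> (\<forall>x\<in>W. \<forall>y\<in>W. (induced W E)\<^sup>*\<^sup>* x y)"

definition bipartite :: "'a set \<Rightarrow> ('a \<Rightarrow> 'a \<Rightarrow> bool) \<Rightarrow> bool" where
  "bipartite V E \<longleftrightarrow> (\<exists>A B. A \<inter> B = {} \<and> A \<union> B = V \<and>
     (\<forall>x\<in>V. \<forall>y\<in>V. E x y \<longrightarrow> (x \<in> A \<and> y \<in> B) \<or> (x \<in> B \<and> y \<in> A)))"

definition degree :: "'a set \<Rightarrow> ('a \<Rightarrow> 'a \<Rightarrow> bool) \<Rightarrow> 'a \<Rightarrow> nat" where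
  "degree V E x = card {y \<in> V. E x y}"

definition min_degree :: "'a set \<Rightarrow> ('a \<Rightarrow> 'a \<Rightarrow> bool) \<Rightarrow> nat" where
  "min_degree V E = Min (degree V E ` V)"

definition vertex_connectivity :: "'a set \<Rightarrow> ('a \<Rightarrow> 'a \<Rightarrow> bool) \<Rightarrow> nat" where
  "vertex_connectivity V E =
     Min {card S | S. S \<subseteq> V \<and> (card (V - S) \<le> 1 \<or> \<not> connected_graph (V - S) E)}"

definition kron_Kn_vertices :: "'a set \<Rightarrow> nat \<Rightarrow> ('a \<times> nat) set" where
  "kron_Kn_vertices V n = V \<times> {0..<n}"

definition kron_Kn_adj :: "('a \<Rightarrow> 'a \<Rightarrow> bool) \<Rightarrow> nat \<Rightarrow> 'a \<times> nat \<Rightarrow> 'a \<times> nat \<Rightarrow> bool" where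
  "kron_Kn_adj E n p q \<longleftrightarrow> E (fst p) (fst q) \<and> snd p < n \<and> snd q < n \<and> snd p \<noteq> snd q"

end

theory Submission
  imports Defs
begin

(*
  Let H = (G x K_n) - S and suppose two surviving vertices (u,a), (u,b) of the
  fibre over u lie in different components of H.  Writing K for the n - 2 layers other than
  a and b, short paths through neighbours of u force all of (N(u) + u) x K into S.  Since no
  vertex of H is isolated, some neighbour w of u must survive in layer a or b.
  * If no neighbour of u survives in both layers a and b, then S also hits every neighbour of
    u in layer a or b, so |S| >= (d(u)+1)(n-2) + d(u) > (n-1)delta.
  * If a neighbour w survives in both layers, then (N(u) + N(w)) x K lies in S, N(u) and N(w)
    are disjoint, and |S| >= 2 delta (n-2) >= (n-1) delta.  Hence S is exactly this set, the
    layers a and b survive entirely, and they contain the bipartite double cover G x K_2.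
    As G is connected and not bipartite this cover is connected, contradicting the choice
    of (u,a), (u,b).
*)

section \<open>The bipartite double cover of a connected nonbipartite graph\<close>

text \<open>If a symmetric relation R links (x,a) to (y,b) and (x,b) to (y,a) along every edge xy of
  a connected graph, and (u,a), (u,b) are not R-connected, then the graph is bipartite: the
  side of x is whether (x,a) is R-connected to (u,a).\<close>

lemma bipartite_if_double_cover_disconnected:
  fixes V :: "'a set" and E :: "'a \<Rightarrow> 'a \<Rightarrow> bool" and R :: "'a \<times> 'b \<Rightarrow> 'a \<times> 'b \<Rightarrow> bool"
  assumes con: "connected_graph V E" and u: "u \<in> V"
    and R_sym: "symp R"
    and cover: "\<And>x y. x \<in> V \<Longrightarrow> y \<in> V \<Longrightarrow> E x y \<Longrightarrow> R (x,a) (y,b) \<and> R (x,b) (y,a)"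
    and sep: "\<not> R\<^sup>*\<^sup>* (u,a) (u,b)"
  shows "bipartite V E"
proof -
  let ?C = "R\<^sup>*\<^sup>*"
  have C_sym: "?C p q \<Longrightarrow> ?C q p" for p q
    using sympD[OF symp_rtranclp[OF R_sym]] .
  have C_trans: "?C p q \<Longrightarrow> ?C q r \<Longrightarrow> ?C p r" for p q r
    by (rule rtranclp_trans)
  have fibre_cases: "(?C (u,a) (x,a) \<and> ?C (u,b) (x,b)) \<or> (?C (u,a) (x,b) \<and> ?C (u,b) (x,a))"
    if "x \<in> V" for x
  proof -
    have "(induced V E)\<^sup>*\<^sup>* u x" using con u that unfolding connected_graph_def by blast
    then show ?thesis
    proof induction
      case base then show ?case by simp
    next
      case (step y z)
      then have "R (y,a) (z,b)" "R (y,b) (z,a)" using cover unfolding induced_def by auto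
      with step.IH show ?case by (meson rtranclp.rtrancl_into_rtrancl)
    qed
  qed
  define P where "P = {x \<in> V. ?C (u,a) (x,a)}"
  have outside_P: "?C (u,a) (x,b)" if "x \<in> V" "x \<notin> P" for x
    using fibre_cases[OF that(1)] that unfolding P_def by blast
  have not_both: "\<not> (?C (u,a) (x,a) \<and> ?C (u,a) (x,b))" if "x \<in> V" for x
    using fibre_cases[OF that] sep C_sym C_trans by blast
  have "(x \<in> P \<and> y \<in> V - P) \<or> (x \<in> V - P \<and> y \<in> P)"
    if xy: "x \<in> V" "y \<in> V" "E x y" for x y
  proof (cases "x \<in> P")
    case True
    then have "?C (u,a) (y,b)" using cover[OF xy] C_trans unfolding P_def by blast
    then show ?thesis using True not_both[OF xy(2)] xy unfolding P_def by blast
  next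
    case False
    then have "?C (u,a) (y,a)" using outside_P[OF xy(1)] cover[OF xy] C_trans by blast
    then show ?thesis using False xy unfolding P_def by blast
  qed
  then show ?thesis unfolding bipartite_def
    by (rule_tac x=P in exI, rule_tac x="V - P" in exI) (auto simp: P_def)
qed

section \<open>A graph times K_n with a set of vertices deleted\<close>

locale kron_deletion =
  fixes V :: "'a set" and E :: "'a \<Rightarrow> 'a \<Rightarrow> bool" and n :: nat and S :: "('a \<times> nat) set"
  assumes graph: "simple_graph V E"
    and S_sub: "S \<subseteq> kron_Kn_vertices V n"
begin

definition rest :: "('a \<times> nat) set" where
  "rest = kron_Kn_vertices V n - S"

abbreviation linked :: "'a \<times> nat \<Rightarrow> 'a \<times> nat \<Rightarrow> bool" where
  "linked \<equiv> (induced rest (kron_Kn_adj E n))\<^sup>*\<^sup>*"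

abbreviation nbhd :: "'a \<Rightarrow> 'a set" where
  "nbhd x \<equiv> {y \<in> V. E x y}"

lemma finite_V: "finite V"
  and E_sym: "E x y \<Longrightarrow> E y x"
  and E_irrefl: "\<not> E x x"
  and E_in_V: "E x y \<Longrightarrow> x \<in> V \<and> y \<in> V"
  using graph unfolding simple_graph_def by auto

lemma finite_S: "finite S"
  using S_sub finite_V unfolding kron_Kn_vertices_def by (meson finite_SigmaI finite_atLeastLessThan finite_subset)

lemma rest_iff: "(x,c) \<in> rest \<longleftrightarrow> x \<in> V \<and> c < n \<and> (x,c) \<notin> S"
  unfolding rest_def kron_Kn_vertices_def by auto

lemma symp_induced_adj: "symp (induced rest (kron_Kn_adj E n))"
  unfolding symp_def induced_def kron_Kn_adj_def using E_sym by auto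

lemma edge_linked:
  assumes "(x,c) \<in> rest" "(y,e) \<in> rest" "E x y" "c \<noteq> e"
  shows "linked (x,c) (y,e)"
  using assms rest_iff unfolding induced_def kron_Kn_adj_def by auto

lemma min_degree_le: "x \<in> V \<Longrightarrow> min_degree V E \<le> card (nbhd x)"
  unfolding min_degree_def degree_def using finite_V by simp

lemma card_layers_other:
  assumes "a < n" "b < n" "a \<noteq> b"
  shows "card ({0..<n} - {a,b}) = n - 2"
  using assms by (subst card_Diff_subset) auto

context
  fixes u :: 'a and a b :: nat
  assumes u: "u \<in> V" and ua: "(u,a) \<in> rest" and ub: "(u,b) \<in> rest"
    and sep: "\<not> linked (u,a) (u,b)"
    and no_isolated: "\<forall>x\<in>rest. \<exists>y\<in>rest. kron_Kn_adj E n x y"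
    and fibres_survive: "\<forall>x\<in>V. \<exists>c<n. (x,c) \<notin> S"
begin

lemma layers_distinct: "a \<noteq> b" "a < n" "b < n"
  using sep ua ub rest_iff by auto

lemma no_path:
  assumes "linked (u,a) p" "linked p (u,b)"
  shows False
  using assms sep by (meson rtranclp_trans)

text \<open>Over a neighbour of u all layers except a and b are deleted: otherwise they
  would be a common neighbour of (u,a) and (u,b).\<close>
lemma neighbour_other_layers_deleted:
  assumes "E u w" "c \<in> {0..<n} - {a,b}"
  shows "(w,c) \<in> S"
proof (rule ccontr)
  assume "(w,c) \<notin> S"
  then have wc: "(w,c) \<in> rest" using assms E_in_V rest_iff by auto
  have "linked (u,a) (w,c)" using edge_linked[OF ua wc assms(1)] assms(2) by auto
  moreover have "linked (w,c) (u,b)" using edge_linked[OF wc ub E_sym[OF assms(1)]] assms(2) by auto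
  ultimately show False by (rule no_path)
qed

lemma neighbour_in_layer:
  assumes "(u,c) \<in> rest" "{c,d} = {a,b}"
  obtains w where "E u w" "(w,d) \<in> rest"
proof -
  obtain y where y: "y \<in> rest" "kron_Kn_adj E n (u,c) y" using no_isolated assms(1) by blast
  obtain w e where yy: "y = (w,e)" by (cases y)
  have "E u w" "e \<noteq> c" "e < n" using y(2) yy unfolding kron_Kn_adj_def by auto
  moreover have "e \<in> {a,b}"
    using neighbour_other_layers_deleted[of w e] y(1) yy rest_iff calculation by auto
  then have "e = d" using \<open>e \<noteq> c\<close> assms(2) by (metis insert_iff singletonD)
  ultimately show ?thesis using that y yy by auto
qed

text \<open>The fibre over u itself is deleted outside the layers a and b: a surviving (u,c)
  would connect (u,a) - (w1,b) - (u,c) - (w2,a) - (u,b).\<close>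
lemma own_other_layers_deleted:
  assumes c: "c \<in> {0..<n} - {a,b}"
  shows "(u,c) \<in> S"
proof (rule ccontr)
  assume "(u,c) \<notin> S"
  then have uc: "(u,c) \<in> rest" using c u rest_iff by auto
  obtain w1 where w1: "E u w1" "(w1,b) \<in> rest" using neighbour_in_layer[OF ua] by blast
  obtain w2 where w2: "E u w2" "(w2,a) \<in> rest" using neighbour_in_layer[OF ub] by blast
  have "linked (u,a) (w1,b)" "linked (w1,b) (u,c)" "linked (u,c) (w2,a)" "linked (w2,a) (u,b)"
    using edge_linked[OF ua w1(2) w1(1)] edge_linked[OF w1(2) uc E_sym[OF w1(1)]]
      edge_linked[OF uc w2(2) w2(1)] edge_linked[OF w2(2) ub E_sym[OF w2(1)]] layers_distinct c
    by auto
  then show False using no_path by (meson rtranclp_trans)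
qed

lemma closed_nbhd_other_layers_deleted: "insert u (nbhd u) \<times> ({0..<n} - {a,b}) \<subseteq> S"
  using neighbour_other_layers_deleted own_other_layers_deleted by blast

text \<open>Case 1: no neighbour of u survives in both layers a and b.  Then every neighbour of u
  costs one further deleted vertex, and S is too large.\<close>
lemma deleted_count_no_double_survivor:
  assumes none: "\<And>w. E u w \<Longrightarrow> (w,a) \<in> S \<or> (w,b) \<in> S"
  shows "(card (nbhd u) + 1) * (n - 2) + card (nbhd u) \<le> card S"
proof -
  define T1 where "T1 = insert u (nbhd u) \<times> ({0..<n} - {a,b})"
  define T2 where "T2 = S \<inter> (nbhd u \<times> {a,b})"
  have sub: "T1 \<union> T2 \<subseteq> S" and disj: "T1 \<inter> T2 = {}"
    using closed_nbhd_other_layers_deleted unfolding T1_def T2_def by auto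
  have fin: "finite T1" "finite T2" using sub finite_S finite_subset by auto
  have "card T1 + card T2 = card (T1 \<union> T2)" using card_Un_disjoint[OF fin disj] by simp
  also have "\<dots> \<le> card S" using card_mono[OF finite_S sub] .
  finally have sum: "card T1 + card T2 \<le> card S" .
  have card_T1: "card T1 = (card (nbhd u) + 1) * (n - 2)"
    unfolding T1_def using finite_V E_irrefl card_layers_other[OF layers_distinct(2,3,1)]
    by (simp add: card_cartesian_product)
  have "nbhd u \<subseteq> fst ` T2"
  proof
    fix z assume "z \<in> nbhd u"
    then have "(z,a) \<in> T2 \<or> (z,b) \<in> T2" using none unfolding T2_def by auto
    then show "z \<in> fst ` T2" by (metis fst_conv image_eqI)
  qed
  then have "card (nbhd u) \<le> card (fst ` T2)" using card_mono finite_imageI[OF fin(2)] by blast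
  also have "\<dots> \<le> card T2" using card_image_le[OF fin(2)] .
  finally have "card (nbhd u) \<le> card T2" .
  then show ?thesis using sum card_T1 by linarith
qed

context
  fixes w :: 'a
  assumes w: "E u w" and wa: "(w,a) \<in> rest" and wb: "(w,b) \<in> rest"
begin

text \<open>A common neighbour y of u and w would have a survivor (y,c) with c = a or c = b,
  giving a path (u,a) - (w,b) - (y,a) - (u,b) or (u,a) - (y,b) - (w,a) - (u,b).\<close>
lemma nbhds_disjoint: "nbhd u \<inter> nbhd w = {}"
proof (rule ccontr)
  assume "nbhd u \<inter> nbhd w \<noteq> {}"
  then obtain y where y: "y \<in> V" "E u y" "E w y" by blast
  obtain c where c: "c < n" "(y,c) \<notin> S" using fibres_survive y(1) by blast
  then have yc: "(y,c) \<in> rest" using y(1) rest_iff by blast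
  have "c = a \<or> c = b" using neighbour_other_layers_deleted[OF y(2)] c by auto
  then show False
  proof
    assume "c = a"
    then have "linked (u,a) (w,b)" "linked (w,b) (y,a)" "linked (y,a) (u,b)"
      using edge_linked[OF ua wb w] edge_linked[of w b y a] edge_linked[of y a u b]
        ub wb yc y(3) E_sym[OF y(2)] layers_distinct by auto
    then show False using no_path by (meson rtranclp_trans)
  next
    assume "c = b"
    then have "linked (u,a) (y,b)" "linked (y,b) (w,a)" "linked (w,a) (u,b)"
      using edge_linked[of u a y b] edge_linked[of y b w a] edge_linked[OF wa ub E_sym[OF w]]
        ua wa yc y(2) E_sym[OF y(3)] layers_distinct by auto
    then show False using no_path by (meson rtranclp_trans)
  qed
qed

text \<open>A survivor (y,c) over a neighbour y \<noteq> u of w, with c outside {a,b}, would give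
  the path (u,a) - (w,b) - (y,c) - (w,a) - (u,b).\<close>
lemma nbhds_other_layers_deleted: "(nbhd u \<union> nbhd w) \<times> ({0..<n} - {a,b}) \<subseteq> S"
proof (rule subsetI)
  fix p assume "p \<in> (nbhd u \<union> nbhd w) \<times> ({0..<n} - {a,b})"
  then obtain y c where p: "p = (y,c)" and y: "y \<in> nbhd u \<union> nbhd w"
    and c: "c \<in> {0..<n} - {a,b}" by blast
  have "(y,c) \<in> S"
  proof (cases "y \<in> nbhd u \<or> y = u")
    case True
    then have "(y,c) \<in> insert u (nbhd u) \<times> ({0..<n} - {a,b})" using y c by auto
    then show ?thesis by (rule subsetD[OF closed_nbhd_other_layers_deleted])
  next
    case False
    show ?thesis
    proof (rule ccontr)
      assume "(y,c) \<notin> S"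
      then have yc: "(y,c) \<in> rest" using y c rest_iff by auto
      have "E w y" using y False by blast
      then have "linked (u,a) (w,b)" "linked (w,b) (y,c)" "linked (y,c) (w,a)" "linked (w,a) (u,b)"
        using edge_linked[OF ua wb w] edge_linked[OF wb yc \<open>E w y\<close>]
          edge_linked[OF yc wa E_sym[OF \<open>E w y\<close>]] edge_linked[OF wa ub E_sym[OF w]]
          layers_distinct c by auto
      then show False using no_path by (meson rtranclp_trans)
    qed
  qed
  then show "p \<in> S" using p by simp
qed

lemma card_nbhds_other_layers:
  "card ((nbhd u \<union> nbhd w) \<times> ({0..<n} - {a,b})) = (card (nbhd u) + card (nbhd w)) * (n - 2)"
  using nbhds_disjoint finite_V card_layers_other[OF layers_distinct(2,3,1)]
  by (simp add: card_cartesian_product card_Un_disjoint)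

end

text \<open>In case 2 the deleted set is forced to be exactly
  (N(u) + N(w)) x K, so the layers a and b survive completely; they carry the bipartite
  double cover of G, which would then be disconnected.\<close>
lemma separated_pair_impossible:
  assumes con: "connected_graph V E" and nbip: "\<not> bipartite V E"
    and n3: "n \<ge> 3" and card_S: "card S = (n - 1) * min_degree V E"
  shows False
proof (cases "\<exists>w. E u w \<and> (w,a) \<in> rest \<and> (w,b) \<in> rest")
  case False
  then have "(card (nbhd u) + 1) * (n - 2) + card (nbhd u) \<le> card S"
    using deleted_count_no_double_survivor E_in_V rest_iff layers_distinct by blast
  moreover have "(min_degree V E + 1) * (n - 2) + min_degree V E
      \<le> (card (nbhd u) + 1) * (n - 2) + card (nbhd u)"
    using min_degree_le[OF u] by (intro add_mono mult_le_mono1) simp_all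
  ultimately have "(min_degree V E + 1) * (n - 2) + min_degree V E \<le> (n - 1) * min_degree V E"
    using card_S by linarith
  then show False using n3 by (simp add: algebra_simps)
next
  case True
  then obtain w where w: "E u w" "(w,a) \<in> rest" "(w,b) \<in> rest" by blast
  define T where "T = (nbhd u \<union> nbhd w) \<times> ({0..<n} - {a,b})"
  have "min_degree V E \<le> card (nbhd u)" "min_degree V E \<le> card (nbhd w)"
    using min_degree_le u E_in_V[OF w(1)] by auto
  then have "(min_degree V E + min_degree V E) * (n - 2) \<le> card T"
    unfolding T_def card_nbhds_other_layers[OF w] by (intro mult_le_mono1) simp
  moreover have "(n - 1) * min_degree V E \<le> (min_degree V E + min_degree V E) * (n - 2)"
  proof -
    obtain m where "n = m + 3" using n3 by (metis add.commute le_Suc_ex)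
    then show ?thesis by (simp add: algebra_simps)
  qed
  ultimately have "card S \<le> card T" using card_S by linarith
  then have "T = S"
    using nbhds_other_layers_deleted[OF w] finite_S unfolding T_def by (simp add: card_seteq)
  then have layers_survive: "x \<in> V \<Longrightarrow> (x,a) \<in> rest \<and> (x,b) \<in> rest" for x
    using rest_iff layers_distinct unfolding T_def by auto
  have "bipartite V E"
  proof (rule bipartite_if_double_cover_disconnected[OF con u symp_induced_adj])
    show "induced rest (kron_Kn_adj E n) (x,a) (y,b) \<and> induced rest (kron_Kn_adj E n) (x,b) (y,a)"
      if "x \<in> V" "y \<in> V" "E x y" for x y
      using that layers_survive layers_distinct unfolding induced_def kron_Kn_adj_def by auto
  qed (rule sep)
  then show False using nbip by simp
qed

end

end

theorem lemma2p4:
  fixes V :: "'a set" and E :: "'a \<Rightarrow> 'a \<Rightarrow> bool" and n :: nat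
    and S :: "('a \<times> nat) set"
  assumes "simple_graph V E"
    and "connected_graph V E"
    and "\<not> bipartite V E"
    and "vertex_connectivity V E = min_degree V E"
    and "min_degree V E > 0"
    and "n \<ge> 3"
    and "S \<subseteq> kron_Kn_vertices V n"
    and "card S = (n - 1) * min_degree V E"
    and "\<forall>u\<in>V. ({u} \<times> {0..<n}) - S \<noteq> {}"
    and "\<forall>x \<in> kron_Kn_vertices V n - S. \<exists>y \<in> kron_Kn_vertices V n - S. kron_Kn_adj E n x y"
  shows "\<forall>u\<in>V. \<exists>x \<in> kron_Kn_vertices V n - S.
           ({u} \<times> {0..<n}) - S \<subseteq> component (kron_Kn_vertices V n - S) (kron_Kn_adj E n) x"
proof
  interpret kron_deletion V E n S using assms(1,7) by unfold_locales
  have no_isolated: "\<forall>x\<in>rest. \<exists>y\<in>rest. kron_Kn_adj E n x y"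
    using assms(10) unfolding rest_def .
  have fibres_survive: "\<forall>x\<in>V. \<exists>c<n. (x,c) \<notin> S" using assms(9) by auto
  fix u assume u: "u \<in> V"
  then obtain a where ua: "(u,a) \<in> rest" using fibres_survive rest_iff by blast
  have "linked (u,a) (u,b)" if ub: "(u,b) \<in> rest" for b
    using separated_pair_impossible[OF u ua ub _ no_isolated fibres_survive assms(2,3,6,8)] by blast
  then have "({u} \<times> {0..<n}) - S \<subseteq> component rest (kron_Kn_adj E n) (u,a)"
    unfolding component_def using rest_iff u by auto
  then show "\<exists>x \<in> kron_Kn_vertices V n - S.
           ({u} \<times> {0..<n}) - S \<subseteq> component (kron_Kn_vertices V n - S) (kron_Kn_adj E n) x"
    using ua unfolding rest_def by blast
qed

end
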